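(* Let $\Gamma=(Q,A,E,(\delta_e)_{e\in E})$ be an MEMDP, $q\in Q$, and $W$ a parity objective. Then $$\sup_{\tau\in\mathcal D(\mathrm{Strat}(Q,A))}\inf_{b\in\mathcal D(E)}\mathrm{val}^{\mathrm{pr}}_q(\Gamma,b,\tau,W)=\inf_{b\in\mathcal D(E)}\sup_{\tau\in\mathcal D(\mathrm{Strat}(Q,A))}\mathrm{val}^{\mathrm{pr}}_q(\Gamma,b,\tau,W),$$ and consequently $\sup_{\tau\in\mathcal D(\mathrm{Strat}(Q,A))}\mathrm{val}^{\mathrm{uni}}_q(\Gamma,\tau,W)=\inf_{b\in\mathcal D(E)}\mathrm{val}^{\mathrm{pr}}_q(\Gamma,b,W)$.
   Context: $\mathcal D(X)$ is the set of distributions on $X$ with countable support. An MDP $G=(Q,A,\delta)$ has finite non-empty $Q,A$ and $\delta:Q\times A\to\mathcal D(Q)$; strategies are maps $\sigma:Q\cdot(A\cdot Q)^*\to\mathcal D(A)$, $\mathrm{Strat}(Q,A)$ is their set, and $\mathbb P^\sigma_q[G,\cdot]$ is the induced probability measure on infinite runs from $q$ (infinite state sequences measured by projection). A mixed strategy is $\tau\in\mathcal D(\mathrm{Strat}(Q,A))$ (countable support), with $\mathbb P^\tau_q[G,\cdot]:=\sum_\sigma\tau(\sigma)\mathbb P^\sigma_q[G,\cdot]$. A parity objective given by $f:Q\to\mathbb N$ is the set of infinite state sequences whose maximal label seen infinitely often is even. An MEMDP is $\Gamma=(Q,A,E,(\delta_e)_{e\in E})$ with $E$ finite non-empty and each $\Gamma[e]=(Q,A,\delta_e)$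 an MDP. For a (mixed or not) strategy $\tau$: $\mathrm{val}^{\mathrm{pr}}_q(\Gamma,b,\tau,W)=\sum_e b(e)\mathbb P^\tau_q[\Gamma[e],W]$, $\mathrm{val}^{\mathrm{uni}}_q(\Gamma,\tau,W)=\min_e\mathbb P^\tau_q[\Gamma[e],W]$; $\mathrm{val}^{\mathrm{pr}}_q(\Gamma,b,W)=\sup_{\sigma\in\mathrm{Strat}(Q,A)}\mathrm{val}^{\mathrm{pr}}_q(\Gamma,b,\sigma,W)$. *)

theory Defs
  imports "HOL-Probability.Probability"
begin

text \<open>Histories Q (A Q)^* are represented as a start state together with the list
of subsequent (action, state) pairs. A strategy maps histories to distributions
on actions (pmfs have countable support).\<close>

type_synonym ('q, 'a) strat = "'q \<times> ('a \<times> 'q) list \<Rightarrow> 'a pmf"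

type_synonym ('q, 'a) trans = "'q \<Rightarrow> 'a \<Rightarrow> 'q pmf"

definition hist_prob :: "('q, 'a) strat \<Rightarrow> ('q, 'a) trans \<Rightarrow> 'q \<Rightarrow> ('a \<times> 'q) list \<Rightarrow> real" where
  "hist_prob \<sigma> \<delta> q0 h =
     (\<Prod>i<length h.
        let qi = (if i = 0 then q0 else snd (h ! (i - 1))) in
        pmf (\<sigma> (q0, take i h)) (fst (h ! i)) * pmf (\<delta> qi (fst (h ! i))) (snd (h ! i)))"

definition state_prefix_prob :: "('q, 'a::finite) strat \<Rightarrow> ('q, 'a) trans \<Rightarrow> 'q \<Rightarrow> 'q list \<Rightarrow> real" where
  "state_prefix_prob \<sigma> \<delta> q0 qs =
     (\<Sum>as \<in> {as. length as = length qs}. hist_prob \<sigma> \<delta> q0 (zip as qs))"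

definition run_measure :: "('q, 'a::finite) strat \<Rightarrow> ('q, 'a) trans \<Rightarrow> 'q \<Rightarrow> 'q stream measure" where
  "run_measure \<sigma> \<delta> q0 = (SOME M.
      sets M = sets (stream_space (count_space UNIV)) \<and> prob_space M \<and>
      (\<forall>qs. emeasure M {\<omega> \<in> space M. stake (Suc (length qs)) \<omega> = q0 # qs}
             = ennreal (state_prefix_prob \<sigma> \<delta> q0 qs)))"

definition Pr :: "('q, 'a::finite) trans \<Rightarrow> ('q, 'a) strat \<Rightarrow> 'q \<Rightarrow> 'q stream set \<Rightarrow> real" where
  "Pr \<delta> \<sigma> q W = measure (run_measure \<sigma> \<delta> q) W"

definition Pr_mixed :: "('q, 'a::finite) trans \<Rightarrow> ('q, 'a) strat pmf \<Rightarrow> 'q \<Rightarrow> 'q stream set \<Rightarrow> real" where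
  "Pr_mixed \<delta> \<tau> q W = measure_pmf.expectation \<tau> (\<lambda>\<sigma>. Pr \<delta> \<sigma> q W)"

definition parity_obj :: "('q \<Rightarrow> nat) \<Rightarrow> 'q stream set" where
  "parity_obj f = {\<omega>. even (Max {f q | q. \<exists>\<^sub>\<infinity> i. \<omega> !! i = q})}"

definition val_pr_mixed :: "('e::finite \<Rightarrow> ('q, 'a::finite) trans) \<Rightarrow> 'e pmf \<Rightarrow> ('q, 'a) strat pmf
    \<Rightarrow> 'q \<Rightarrow> 'q stream set \<Rightarrow> real" where
  "val_pr_mixed \<Gamma> b \<tau> q W = (\<Sum>e\<in>UNIV. pmf b e * Pr_mixed (\<Gamma> e) \<tau> q W)"

definition val_pr_strat :: "('e::finite \<Rightarrow> ('q, 'a::finite) trans) \<Rightarrow> 'e pmf \<Rightarrow> ('q, 'a) strat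
    \<Rightarrow> 'q \<Rightarrow> 'q stream set \<Rightarrow> real" where
  "val_pr_strat \<Gamma> b \<sigma> q W = (\<Sum>e\<in>UNIV. pmf b e * Pr (\<Gamma> e) \<sigma> q W)"

definition val_uni_mixed :: "('e::finite \<Rightarrow> ('q, 'a::finite) trans) \<Rightarrow> ('q, 'a) strat pmf
    \<Rightarrow> 'q \<Rightarrow> 'q stream set \<Rightarrow> real" where
  "val_uni_mixed \<Gamma> \<tau> q W = Min (range (\<lambda>e. Pr_mixed (\<Gamma> e) \<tau> q W))"

definition val_pr :: "('e::finite \<Rightarrow> ('q, 'a::finite) trans) \<Rightarrow> 'e pmf
    \<Rightarrow> 'q \<Rightarrow> 'q stream set \<Rightarrow> real" where
  "val_pr \<Gamma> b q W = (SUP \<sigma>. val_pr_strat \<Gamma> b \<sigma> q W)"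

end

theory Submission
  imports Defs
begin

text \<open>A mixed strategy may randomise between two mixed strategies, and the probability of
any set of runs is affine in the mixed strategy, so the vectors
\<open>(P\<^sup>\<tau>\<^sub>q[\<Gamma>[e], W])\<^sub>e\<close> form a bounded convex subset of \<open>\<real>\<^sup>E\<close>. Separating this set from
the open orthant above its value \<open>sup\<^sub>\<tau> min\<^sub>e\<close> yields a belief \<open>b\<close> under which no strategy
does better, which is the minimax equality. The uniform value is \<open>sup\<^sub>\<tau> min\<^sub>e\<close>, and for a fixed
belief mixing does not beat pure strategies, which gives the second equation. Nothing about
\<open>W\<close> is used beyond its being a set of runs.\<close>

lemma pmf_bind_map_Pair:
  "pmf (bind_pmf M (\<lambda>x. map_pmf (Pair x) (N x))) (a, b) = pmf M a * pmf (N a) b"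
proof -
  have "pmf (map_pmf (Pair x) (N x)) (a, b) = indicator {a} x * pmf (N a) b" for x
  proof (cases "x = a")
    case True
    then show ?thesis
      using pmf_map_inj'[of "Pair a" "N a" b] by (simp add: inj_on_def)
  next
    case False
    then have "(a, b) \<notin> set_pmf (map_pmf (Pair x) (N x))"
      by auto
    then show ?thesis
      using False by (simp add: set_pmf_eq)
  qed
  then show ?thesis
    by (simp add: pmf_bind measure_pmf_single)
qed

definition last_state :: "'q \<Rightarrow> ('a \<times> 'q) list \<Rightarrow> 'q" where
  "last_state q0 h = (if h = [] then q0 else snd (last h))"

definition step_pmf ::
    "('q, 'a) strat \<Rightarrow> ('q, 'a) trans \<Rightarrow> 'q \<Rightarrow> ('a \<times> 'q) list \<Rightarrow> ('a \<times> 'q) pmf" where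
  "step_pmf \<sigma> \<delta> q0 h = bind_pmf (\<sigma> (q0, h)) (\<lambda>a. map_pmf (Pair a) (\<delta> (last_state q0 h) a))"

primrec history :: "nat \<Rightarrow> (('a \<times> 'q) list \<Rightarrow> 'a \<times> 'q) \<Rightarrow> ('a \<times> 'q) list" where
  "history 0 x = []"
| "history (Suc n) x = history n x @ [x (history n x)]"

lemma length_history [simp]: "length (history n x) = n"
  by (induction n) auto

lemma take_history: "i \<le> n \<Longrightarrow> take i (history n x) = history i x"
  by (induction n) (auto simp: le_Suc_eq)

lemma history_eq_iff:
  "length h = n \<Longrightarrow> history n x = h \<longleftrightarrow> (\<forall>i<n. x (take i h) = h ! i)"
proof (induction n arbitrary: h)
  case (Suc n)
  then obtain h' c where h: "h = h' @ [c]" "length h' = n"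
    by (metis length_Suc_conv_rev)
  then show ?case
    using Suc.IH[OF h(2)] by (auto simp: nth_append less_Suc_eq)
qed simp

text \<open>Runs are built by sampling the next (action, state) pair independently for every finite
history and then following these choices from the empty history.\<close>

definition choice_space ::
    "('q, 'a) strat \<Rightarrow> ('q, 'a) trans \<Rightarrow> 'q \<Rightarrow> (('a \<times> 'q) list \<Rightarrow> 'a \<times> 'q) measure" where
  "choice_space \<sigma> \<delta> q0 = PiM UNIV (\<lambda>h. measure_pmf (step_pmf \<sigma> \<delta> q0 h))"

definition run_of :: "'q \<Rightarrow> (('a \<times> 'q) list \<Rightarrow> 'a \<times> 'q) \<Rightarrow> 'q stream" where
  "run_of q0 x = smap (\<lambda>n. last_state q0 (history n x)) nats"

lemma space_choice_space [simp]: "space (choice_space \<sigma> \<delta> q0) = UNIV"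
  by (auto simp: choice_space_def space_PiM PiE_def extensional_def)

lemma prob_space_choice_space: "prob_space (choice_space \<sigma> \<delta> q0)"
  unfolding choice_space_def by (rule prob_space_PiM) (simp add: prob_space_measure_pmf)

lemma emeasure_history_eq:
  assumes "length h = n"
  shows "emeasure (choice_space \<sigma> \<delta> q0) {x. history n x = h} = ennreal (hist_prob \<sigma> \<delta> q0 h)"
proof -
  let ?M = "\<lambda>t. measure_pmf (step_pmf \<sigma> \<delta> q0 t)"
  define J where "J = (\<lambda>i. take i h) ` {..<n}"
  have inj: "inj_on (\<lambda>i. take i h) {..<n}"
    using assms by (intro inj_onI) (metis length_take lessThan_iff min.absorb4)
  have "{x. history n x = h} = prod_emb UNIV ?M J (Pi\<^sub>E J (\<lambda>t. {h ! length t}))"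
    using assms by (auto simp: history_eq_iff prod_emb_def J_def PiE_def Pi_def extensional_def)
  then have "emeasure (choice_space \<sigma> \<delta> q0) {x. history n x = h}
      = (\<Prod>t\<in>J. emeasure (?M t) {h ! length t})"
    unfolding choice_space_def
    by (simp add: emeasure_PiM_emb J_def prob_space_measure_pmf)
  also have "\<dots> = (\<Prod>i<n. ennreal (pmf (step_pmf \<sigma> \<delta> q0 (take i h)) (h ! i)))"
    using assms by (simp add: J_def prod.reindex[OF inj] emeasure_pmf_single)
  also have "\<dots> = ennreal (hist_prob \<sigma> \<delta> q0 h)"
  proof -
    have "pmf (step_pmf \<sigma> \<delta> q0 (take i h)) (h ! i)
        = pmf (\<sigma> (q0, take i h)) (fst (h ! i))
          * pmf (\<delta> (if i = 0 then q0 else snd (h ! (i - 1))) (fst (h ! i))) (snd (h ! i))"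
      if "i < n" for i
      using that assms pmf_bind_map_Pair[of _ _ "fst (h ! i)" "snd (h ! i)"]
      by (auto simp: step_pmf_def last_state_def last_conv_nth min_def)
    then show ?thesis
      using assms by (simp add: hist_prob_def prod_ennreal)
  qed
  finally show ?thesis .
qed

lemma stake_run_of: "stake (Suc n) (run_of q0 x) = q0 # map snd (history n x)"
proof (rule nth_equalityI)
  fix i assume "i < length (stake (Suc n) (run_of q0 x))"
  then have i: "i \<le> n" by simp
  then have "stake (Suc n) (run_of q0 x) ! i = run_of q0 x !! i"
    by (intro stake_nth) simp
  also have "\<dots> = last_state q0 (history i x)"
    by (simp add: run_of_def)
  also have "\<dots> = last_state q0 (take i (history n x))"
    using i by (simp add: take_history)
  also have "\<dots> = (q0 # map snd (history n x)) ! i"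
    using i by (cases i) (auto simp: last_state_def take_Suc_conv_app_nth)
  finally show "stake (Suc n) (run_of q0 x) ! i = (q0 # map snd (history n x)) ! i" .
qed simp

lemma measurable_history:
  fixes \<sigma> :: "('q::countable, 'a::countable) strat"
  shows "history n \<in> measurable (choice_space \<sigma> \<delta> q0) (count_space UNIV)"
proof (induction n)
  case (Suc n)
  have "(\<lambda>x. (\<lambda>h x. h @ [x h]) (history n x) x) \<in> measurable (choice_space \<sigma> \<delta> q0) (count_space UNIV)"
  proof (rule measurable_compose_countable'[OF _ Suc])
    fix h :: "('a \<times> 'q) list"
    have "(\<lambda>x. x h) \<in> measurable (choice_space \<sigma> \<delta> q0) (count_space UNIV)"
      using measurable_component_singleton[of h UNIV "\<lambda>h. measure_pmf (step_pmf \<sigma> \<delta> q0 h)"]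
      by (simp add: choice_space_def measurable_def)
    then show "(\<lambda>x. h @ [x h]) \<in> measurable (choice_space \<sigma> \<delta> q0) (count_space UNIV)"
      by (rule measurable_compose) simp
  qed simp
  then show ?case
    by simp
qed simp

lemma measurable_run_of:
  fixes \<sigma> :: "('q::countable, 'a::countable) strat"
  shows "run_of q0 \<in> measurable (choice_space \<sigma> \<delta> q0) (stream_space (count_space UNIV))"
proof (rule measurable_stream_space2)
  fix n
  have "(\<lambda>x. last_state q0 (history n x)) \<in> measurable (choice_space \<sigma> \<delta> q0) (count_space UNIV)"
    by (rule measurable_compose[OF measurable_history]) simp
  then show "(\<lambda>x. run_of q0 x !! n) \<in> measurable (choice_space \<sigma> \<delta> q0) (count_space UNIV)"
    by (simp add: run_of_def)
qed

lemma run_of_cylinder_eq: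
  fixes q0 :: 'q and qs :: "'q list"
  shows "{x. stake (Suc (length qs)) (run_of q0 x) = q0 # qs}
    = (\<Union>as\<in>{as. length as = length qs}. {x. history (length qs) x = zip as qs})"
proof -
  have "map snd h = qs \<longleftrightarrow> (\<exists>as. length as = length qs \<and> h = zip as qs)"
    for h :: "('a \<times> 'q) list"
    by (metis length_map map_snd_zip zip_map_fst_snd)
  then show ?thesis
    unfolding stake_run_of list.inject by auto
qed

text \<open>The run measure is defined by choice, so it is a probability measure only because
one exists: the image of the choice space under \<^const>\<open>run_of\<close>.\<close>

lemma run_measure_exists:
  fixes \<sigma> :: "('q::countable, 'a::finite) strat"
  shows "\<exists>M. sets M = sets (stream_space (count_space UNIV)) \<and> prob_space M \<and>
      (\<forall>qs. emeasure M {\<omega> \<in> space M. stake (Suc (length qs)) \<omega> = q0 # qs}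
             = ennreal (state_prefix_prob \<sigma> \<delta> q0 qs))"
proof (intro exI conjI allI)
  let ?\<Omega> = "choice_space \<sigma> \<delta> q0"
  let ?M = "distr ?\<Omega> (stream_space (count_space UNIV)) (run_of q0)"
  show "sets ?M = sets (stream_space (count_space UNIV))" by simp
  show "prob_space ?M"
    by (rule prob_space.prob_space_distr[OF prob_space_choice_space measurable_run_of])
  fix qs :: "'q list"
  let ?A = "{as :: 'a list. length as = length qs}"
  let ?C = "{\<omega> \<in> space ?M. stake (Suc (length qs)) \<omega> = q0 # qs}"
  have "?C \<in> sets (stream_space (count_space UNIV))"
    by simp
  then have "emeasure ?M ?C = emeasure ?\<Omega> (run_of q0 -` ?C \<inter> space ?\<Omega>)"
    by (rule emeasure_distr[OF measurable_run_of])
  also have "run_of q0 -` ?C \<inter> space ?\<Omega> = {x. stake (Suc (length qs)) (run_of q0 x) = q0 # qs}"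
    by (auto simp: space_stream_space simp del: stake.simps)
  also have "\<dots> = (\<Union>as\<in>?A. {x. history (length qs) x = zip as qs})"
    by (rule run_of_cylinder_eq)
  also have "emeasure ?\<Omega> \<dots> = (\<Sum>as\<in>?A. emeasure ?\<Omega> {x. history (length qs) x = zip as qs})"
  proof (rule sum_emeasure[symmetric])
    show "(\<lambda>as. {x. history (length qs) x = zip as qs}) ` ?A \<subseteq> sets ?\<Omega>"
    proof safe
      fix as :: "'a list"
      have "history (length qs) -` {zip as qs} \<inter> space ?\<Omega> \<in> sets ?\<Omega>"
        by (rule measurable_sets[OF measurable_history]) simp
      then show "{x. history (length qs) x = zip as qs} \<in> sets ?\<Omega>"
        by (simp add: vimage_def)
    qed
    show "disjoint_family_on (\<lambda>as. {x. history (length qs) x = zip as qs}) ?A"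
      by (auto simp: disjoint_family_on_def zip_eq_conv)
    show "finite ?A"
      using finite_lists_length_eq[of "UNIV :: 'a set"] by simp
  qed
  also have "\<dots> = ennreal (state_prefix_prob \<sigma> \<delta> q0 qs)"
    by (simp add: emeasure_history_eq state_prefix_prob_def hist_prob_def prod_nonneg)
  finally show "emeasure ?M ?C = ennreal (state_prefix_prob \<sigma> \<delta> q0 qs)" .
qed

lemma prob_space_run_measure:
  fixes \<sigma> :: "('q::countable, 'a::finite) strat"
  shows "prob_space (run_measure \<sigma> \<delta> q0)"
  unfolding run_measure_def by (rule someI_ex[OF run_measure_exists, THEN conjunct2, THEN conjunct1])

lemma Pr_nonneg:
  fixes \<delta> :: "('q::countable, 'a::finite) trans"
  shows "0 \<le> Pr \<delta> \<sigma> q W"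
  by (simp add: Pr_def)

lemma Pr_le_1:
  fixes \<delta> :: "('q::countable, 'a::finite) trans"
  shows "Pr \<delta> \<sigma> q W \<le> 1"
  unfolding Pr_def using prob_space.prob_le_1[OF prob_space_run_measure] .

lemma inner_vec_const: "inner a (\<chi> i. x) = x * (\<Sum>i\<in>UNIV. a $ i)" for a :: "real^'e::finite"
  by (simp add: inner_vec_def sum_distrib_left mult.commute)

lemma upper_orthant_halfspace:
  fixes a :: "real^'e::finite"
  assumes orthant: "\<And>w. (\<forall>i. c < w $ i) \<Longrightarrow> \<beta> \<le> inner a w"
  shows nonneg_if_upper_orthant_halfspace: "0 \<le> a $ e"
    and le_if_upper_orthant_halfspace: "\<beta> \<le> c * (\<Sum>i\<in>UNIV. a $ i)"
proof -
  define s where "s = (\<Sum>i\<in>UNIV. a $ i)"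
  have shift: "\<beta> \<le> x * s + K * a $ i" if "c < x" "0 \<le> K" for x K i
  proof -
    have "\<beta> \<le> inner a ((\<chi> j. x) + K *\<^sub>R axis i 1)"
      using that by (intro orthant) (simp add: axis_def)
    then show ?thesis
      by (simp add: inner_add_right inner_axis inner_vec_const s_def)
  qed
  have nonneg: "0 \<le> a $ i" for i
  proof (rule ccontr)
    assume "\<not> 0 \<le> a $ i"
    define K where "K = (\<bar>(c + 1) * s\<bar> + \<bar>\<beta>\<bar> + 1) / - a $ i"
    have "\<beta> \<le> (c + 1) * s + K * a $ i"
      using \<open>\<not> 0 \<le> a $ i\<close> by (intro shift) (auto simp: K_def intro!: divide_nonneg_neg)
    also have "\<dots> = (c + 1) * s - (\<bar>(c + 1) * s\<bar> + \<bar>\<beta>\<bar> + 1)"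
      using \<open>\<not> 0 \<le> a $ i\<close> by (simp add: K_def)
    finally show False
      using abs_ge_self[of "(c + 1) * s"] abs_ge_minus_self[of \<beta>] by linarith
  qed
  then show "0 \<le> a $ e" .
  have "0 \<le> s"
    unfolding s_def using nonneg by (rule sum_nonneg)
  show "\<beta> \<le> c * s"
  proof (rule field_le_epsilon)
    fix \<epsilon> :: real assume "0 < \<epsilon>"
    have "\<beta> \<le> (c + \<epsilon> / (s + 1)) * s + 0 * a $ e"
      using \<open>0 < \<epsilon>\<close> \<open>0 \<le> s\<close> by (intro shift) auto
    also have "\<dots> \<le> c * s + \<epsilon>"
      using \<open>0 < \<epsilon>\<close> \<open>0 \<le> s\<close> by (simp add: field_simps)
    finally show "\<beta> \<le> c * s + \<epsilon>" .
  qed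
qed

lemma convex_upper_orthant: "convex {w :: real^'e::finite. \<forall>i. c < w $ i}"
proof -
  have "{w :: real^'e. \<forall>i. c < w $ i} = (\<Inter>i. {w. inner (axis i 1) w > c})"
    by (auto simp: inner_axis')
  then show ?thesis
    by (simp add: convex_INT convex_halfspace_gt)
qed

lemma pmf_of_weights_exists:
  fixes w :: "'e::finite \<Rightarrow> real"
  assumes "\<And>e. 0 \<le> w e" and "0 < (\<Sum>e\<in>UNIV. w e)"
  shows "\<exists>b. \<forall>e. pmf b e = w e / (\<Sum>e\<in>UNIV. w e)"
proof -
  let ?f = "\<lambda>e. w e / (\<Sum>e\<in>UNIV. w e)"
  have "(\<integral>\<^sup>+e. ennreal (?f e) \<partial>count_space UNIV) = ennreal (\<Sum>e\<in>UNIV. ?f e)"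
    using assms by (simp add: nn_integral_count_space_finite)
  also have "(\<Sum>e\<in>UNIV. ?f e) = 1"
    using assms(2) by (simp add: sum_divide_distrib[symmetric])
  finally show ?thesis
    using assms by (intro exI[of _ "embed_pmf ?f"]) (simp add: pmf_embed_pmf)
qed

text \<open>Ville's alternative: the weights are the normal of a hyperplane separating the set from
the open orthant above \<open>(c, \<dots>, c)\<close>.\<close>

lemma convex_weights_below:
  fixes V :: "(real^'e::finite) set"
  assumes "convex V" and below: "\<And>v. v \<in> V \<Longrightarrow> \<exists>e. v $ e \<le> c"
  shows "\<exists>b. \<forall>v\<in>V. (\<Sum>e\<in>UNIV. pmf b e * v $ e) \<le> c"
proof (cases "V = {}")
  case False
  let ?T = "{w :: real^'e. \<forall>i. c < w $ i}"
  have "(\<chi> i. c + 1) \<in> ?T"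
    by simp
  moreover have "V \<inter> ?T = {}"
    using below by (auto simp: not_le[symmetric])
  ultimately obtain a \<beta> where "a \<noteq> 0"
    and aV: "\<forall>v\<in>V. inner a v \<le> \<beta>" and aT: "\<forall>w\<in>?T. \<beta> \<le> inner a w"
    using separating_hyperplane_sets[OF \<open>convex V\<close> convex_upper_orthant False] by blast
  define s where "s = (\<Sum>i\<in>UNIV. a $ i)"
  have nonneg: "0 \<le> a $ i" for i
    using aT by (intro nonneg_if_upper_orthant_halfspace) auto
  have "\<beta> \<le> c * s"
    unfolding s_def using aT by (intro le_if_upper_orthant_halfspace) auto
  obtain i where "a $ i \<noteq> 0"
    using \<open>a \<noteq> 0\<close> by (metis vec_eq_iff zero_index)
  then have "0 < s"
    unfolding s_def using nonneg by (intro sum_pos2[of UNIV i]) (auto simp: order.strict_iff_order)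
  then obtain b where b: "\<And>e. pmf b e = a $ e / s"
    using pmf_of_weights_exists[of "\<lambda>e. a $ e"] nonneg unfolding s_def by blast
  show ?thesis
  proof (intro exI ballI)
    fix v assume "v \<in> V"
    have "(\<Sum>e\<in>UNIV. pmf b e * v $ e) = inner a v / s"
      by (simp add: b inner_vec_def sum_divide_distrib)
    also have "\<dots> \<le> c"
      using aV \<open>v \<in> V\<close> \<open>\<beta> \<le> c * s\<close> \<open>0 < s\<close> by (auto simp: divide_le_eq)
    finally show "(\<Sum>e\<in>UNIV. pmf b e * v $ e) \<le> c" .
  qed
qed simp

lemma Min_le_pmf_weighted_sum:
  fixes v :: "'e::finite \<Rightarrow> real"
  shows "Min (range v) \<le> (\<Sum>e\<in>UNIV. pmf b e * v e)"
proof -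
  have "Min (range v) = (\<Sum>e\<in>UNIV. pmf b e * Min (range v))"
    using sum_pmf_eq_1[of UNIV b] by (simp add: sum_distrib_right[symmetric])
  also have "\<dots> \<le> (\<Sum>e\<in>UNIV. pmf b e * v e)"
    by (intro sum_mono mult_left_mono) auto
  finally show ?thesis .
qed

lemma INF_pmf_weighted_sum_eq_Min:
  fixes v :: "'e::finite \<Rightarrow> real"
  shows "(INF b. \<Sum>e\<in>UNIV. pmf b e * v e) = Min (range v)"
proof (rule antisym)
  have "Min (range v) \<in> range v"
    by (rule Min_in) auto
  then obtain e0 where e0: "v e0 = Min (range v)"
    by (metis rangeE)
  have "(INF b. \<Sum>e\<in>UNIV. pmf b e * v e) \<le> (\<Sum>e\<in>UNIV. pmf (return_pmf e0) e * v e)"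
    by (rule cINF_lower) (auto intro: bdd_belowI2 Min_le_pmf_weighted_sum)
  then show "(INF b. \<Sum>e\<in>UNIV. pmf b e * v e) \<le> Min (range v)"
    by (simp add: indicator_def e0)
  show "Min (range v) \<le> (INF b. \<Sum>e\<in>UNIV. pmf b e * v e)"
    by (rule cINF_greatest) (auto intro: Min_le_pmf_weighted_sum)
qed

lemma pmf_weighted_sum_le:
  fixes v :: "'e::finite \<Rightarrow> real"
  assumes "\<And>e. v e \<le> M"
  shows "(\<Sum>e\<in>UNIV. pmf b e * v e) \<le> M"
proof -
  have "(\<Sum>e\<in>UNIV. pmf b e * v e) \<le> (\<Sum>e\<in>UNIV. pmf b e * M)"
    using assms by (intro sum_mono mult_left_mono) auto
  also have "\<dots> = M"
    using sum_pmf_eq_1[of UNIV b] by (simp add: sum_distrib_right[symmetric])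
  finally show ?thesis .
qed

lemma pmf_minimax:
  fixes g :: "'t \<Rightarrow> 'e::finite \<Rightarrow> real"
  assumes bounded: "\<And>t e. g t e \<le> M"
    and mixing: "\<And>t1 t2 p. 0 \<le> p \<Longrightarrow> p \<le> 1 \<Longrightarrow>
      \<exists>t. \<forall>e. g t e = p * g t1 e + (1 - p) * g t2 e"
  shows "(SUP t. INF b. \<Sum>e\<in>UNIV. pmf b e * g t e) = (INF b. SUP t. \<Sum>e\<in>UNIV. pmf b e * g t e)"
proof -
  define c where "c = (SUP t. Min (range (g t)))"
  have Min_le_g: "Min (range (g t)) \<le> g t e" for t e
    by (rule Min_le) auto
  have bdd_Min: "bdd_above (range (\<lambda>t. Min (range (g t))))"
    by (rule bdd_aboveI2[where M=M], rule order_trans[OF Min_le_g bounded])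
  have bdd_sum: "bdd_above (range (\<lambda>t. \<Sum>e\<in>UNIV. pmf b e * g t e))" for b
    by (rule bdd_aboveI2[where M=M], rule pmf_weighted_sum_le, rule bounded)
  have weak: "c \<le> (SUP t. \<Sum>e\<in>UNIV. pmf b e * g t e)" for b
    unfolding c_def by (rule cSUP_mono[OF _ bdd_sum]) (auto intro: Min_le_pmf_weighted_sum)
  let ?V = "range (\<lambda>t. \<chi> e. g t e)"
  have "convex ?V"
  proof (rule convexI)
    fix v w :: "real^'e" and u u' :: real
    assume "v \<in> ?V" "w \<in> ?V" "0 \<le> u" "0 \<le> u'" "u + u' = 1"
    then obtain t1 t2 where "v = (\<chi> e. g t1 e)" "w = (\<chi> e. g t2 e)" and "u' = 1 - u" "u \<le> 1"
      by auto
    moreover obtain t where "\<forall>e. g t e = u * g t1 e + (1 - u) * g t2 e"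
      using mixing \<open>0 \<le> u\<close> \<open>u \<le> 1\<close> by blast
    ultimately have "u *\<^sub>R v + u' *\<^sub>R w = (\<chi> e. g t e)"
      by (simp add: vec_eq_iff)
    then show "u *\<^sub>R v + u' *\<^sub>R w \<in> ?V"
      by (metis rangeI)
  qed
  moreover have "\<exists>e. v $ e \<le> c" if "v \<in> ?V" for v
  proof -
    obtain t where "v = (\<chi> e. g t e)"
      using \<open>v \<in> ?V\<close> by blast
    have "Min (range (g t)) \<in> range (g t)"
      by (rule Min_in) auto
    then obtain e where "g t e = Min (range (g t))"
      by (metis rangeE)
    also have "\<dots> \<le> c"
      unfolding c_def by (rule cSUP_upper[OF UNIV_I bdd_Min])
    finally show ?thesis
      using \<open>v = (\<chi> e. g t e)\<close> by auto
  qed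
  ultimately obtain b0 where b0: "\<forall>v\<in>?V. (\<Sum>e\<in>UNIV. pmf b0 e * v $ e) \<le> c"
    using convex_weights_below by blast
  have "(INF b. SUP t. \<Sum>e\<in>UNIV. pmf b e * g t e) = c"
  proof (rule antisym)
    have "(INF b. SUP t. \<Sum>e\<in>UNIV. pmf b e * g t e) \<le> (SUP t. \<Sum>e\<in>UNIV. pmf b0 e * g t e)"
      by (rule cINF_lower[OF bdd_belowI2[OF weak] UNIV_I])
    also have "\<dots> \<le> c"
      using b0 by (intro cSUP_least) auto
    finally show "(INF b. SUP t. \<Sum>e\<in>UNIV. pmf b e * g t e) \<le> c" .
    show "c \<le> (INF b. SUP t. \<Sum>e\<in>UNIV. pmf b e * g t e)"
      by (rule cINF_greatest[OF UNIV_not_empty weak])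
  qed
  then show ?thesis
    by (simp add: INF_pmf_weighted_sum_eq_Min c_def)
qed

lemma expectation_bernoulli_mixture:
  fixes F :: "'a \<Rightarrow> real"
  assumes p: "0 \<le> p" "p \<le> 1" and F: "\<And>x. 0 \<le> F x" "\<And>x. F x \<le> B"
  shows "measure_pmf.expectation (bind_pmf (bernoulli_pmf p) (\<lambda>b. if b then M1 else M2)) F
    = p * measure_pmf.expectation M1 F + (1 - p) * measure_pmf.expectation M2 F"
proof -
  have nn: "ennreal (measure_pmf.expectation M F) = (\<integral>\<^sup>+x. ennreal (F x) \<partial>measure_pmf M)" for M
    using F by (intro nn_integral_eq_integral[symmetric] measure_pmf.integrable_const_bound[where B=B]) auto
  have E_nonneg: "0 \<le> measure_pmf.expectation M F" for M
    using F by (simp add: integral_nonneg_AE)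
  have "ennreal (measure_pmf.expectation (bind_pmf (bernoulli_pmf p) (\<lambda>b. if b then M1 else M2)) F)
      = (\<integral>\<^sup>+b. ennreal (measure_pmf.expectation (if b then M1 else M2) F) \<partial>measure_pmf (bernoulli_pmf p))"
    by (simp add: nn)
  also have "\<dots> = ennreal (p * measure_pmf.expectation M1 F + (1 - p) * measure_pmf.expectation M2 F)"
    using p by (simp add: E_nonneg mult.commute ennreal_mult'[symmetric] ennreal_plus[symmetric] del: ennreal_plus)
  finally have "ennreal (measure_pmf.expectation (bind_pmf (bernoulli_pmf p) (\<lambda>b. if b then M1 else M2)) F)
      = ennreal (p * measure_pmf.expectation M1 F + (1 - p) * measure_pmf.expectation M2 F)" .
  moreover have "0 \<le> p * measure_pmf.expectation M1 F + (1 - p) * measure_pmf.expectation M2 F"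
    using p E_nonneg by (intro add_nonneg_nonneg mult_nonneg_nonneg) auto
  ultimately show ?thesis
    using E_nonneg ennreal_inj by blast
qed

lemma Pr_mixed_le_1:
  fixes \<delta> :: "('q::countable, 'a::finite) trans"
  shows "Pr_mixed \<delta> \<tau> q W \<le> 1"
  unfolding Pr_mixed_def
  by (intro measure_pmf.integral_le_const measure_pmf.integrable_const_bound[where B=1])
    (auto simp: Pr_nonneg Pr_le_1)

lemma Pr_mixed_bernoulli_mixture:
  fixes \<delta> :: "('q::countable, 'a::finite) trans"
  assumes "0 \<le> p" "p \<le> 1"
  shows "Pr_mixed \<delta> (bind_pmf (bernoulli_pmf p) (\<lambda>b. if b then \<tau>1 else \<tau>2)) q W
     = p * Pr_mixed \<delta> \<tau>1 q W + (1 - p) * Pr_mixed \<delta> \<tau>2 q W"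
  unfolding Pr_mixed_def using assms
  by (intro expectation_bernoulli_mixture[where B=1]) (auto simp: Pr_nonneg Pr_le_1)

lemma val_pr_mixed_eq_expectation:
  fixes \<Gamma> :: "'e::finite \<Rightarrow> ('q::countable, 'a::finite) trans"
  shows "val_pr_mixed \<Gamma> b \<tau> q W = measure_pmf.expectation \<tau> (\<lambda>\<sigma>. val_pr_strat \<Gamma> b \<sigma> q W)"
proof -
  have "integrable (measure_pmf \<tau>) (\<lambda>\<sigma>. pmf b e * Pr (\<Gamma> e) \<sigma> q W)" for e
    by (intro integrable_mult_right measure_pmf.integrable_const_bound[where B=1])
      (auto simp: Pr_nonneg Pr_le_1)
  then show ?thesis
    by (simp add: val_pr_mixed_def val_pr_strat_def Pr_mixed_def Bochner_Integration.integral_sum)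
qed

lemma val_pr_eq_SUP_val_pr_mixed:
  fixes \<Gamma> :: "'e::finite \<Rightarrow> ('q::countable, 'a::finite) trans"
  shows "val_pr \<Gamma> b q W = (SUP \<tau>. val_pr_mixed \<Gamma> b \<tau> q W)"
proof -
  have le_1: "val_pr_strat \<Gamma> b \<sigma> q W \<le> 1" for \<sigma>
    unfolding val_pr_strat_def by (intro pmf_weighted_sum_le Pr_le_1)
  have nonneg: "0 \<le> val_pr_strat \<Gamma> b \<sigma> q W" for \<sigma>
    unfolding val_pr_strat_def by (intro sum_nonneg mult_nonneg_nonneg pmf_nonneg Pr_nonneg)
  have pure: "val_pr_strat \<Gamma> b \<sigma> q W = val_pr_mixed \<Gamma> b (return_pmf \<sigma>) q W" for \<sigma>
    by (simp add: val_pr_mixed_eq_expectation)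
  have "val_pr_mixed \<Gamma> b \<tau> q W \<le> val_pr \<Gamma> b q W" for \<tau>
    unfolding val_pr_mixed_eq_expectation val_pr_def
    by (intro measure_pmf.integral_le_const measure_pmf.integrable_const_bound[where B=1]
        AE_pmfI cSUP_upper bdd_aboveI2[where M=1])
      (auto simp: le_1 nonneg abs_le_iff)
  moreover have "val_pr_mixed \<Gamma> b \<tau> q W \<le> 1" for \<tau>
    unfolding val_pr_mixed_def by (intro pmf_weighted_sum_le Pr_mixed_le_1)
  ultimately show ?thesis
    unfolding val_pr_def pure
    by (intro antisym cSUP_least cSUP_upper bdd_aboveI2[where M=1]) auto
qed

theorem mainTheorem6:
  fixes \<Gamma> :: "'e::finite \<Rightarrow> 'q::finite \<Rightarrow> 'a::finite \<Rightarrow> 'q pmf"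
    and q :: 'q and f :: "'q \<Rightarrow> nat"
  shows "(SUP \<tau>. INF b. val_pr_mixed \<Gamma> b \<tau> q (parity_obj f))
           = (INF b. SUP \<tau>. val_pr_mixed \<Gamma> b \<tau> q (parity_obj f))
         \<and> (SUP \<tau>. val_uni_mixed \<Gamma> \<tau> q (parity_obj f)) = (INF b. val_pr \<Gamma> b q (parity_obj f))"
proof -
  define W where "W = parity_obj f"
  define g where "g \<tau> e = Pr_mixed (\<Gamma> e) \<tau> q W" for \<tau> e
  have val_pr_mixed_g: "val_pr_mixed \<Gamma> b \<tau> q W = (\<Sum>e\<in>UNIV. pmf b e * g \<tau> e)" for b \<tau>
    by (simp add: val_pr_mixed_def g_def)
  have minimax: "(SUP \<tau>. INF b. val_pr_mixed \<Gamma> b \<tau> q W) = (INF b. SUP \<tau>. val_pr_mixed \<Gamma> b \<tau> q W)"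
    unfolding val_pr_mixed_g
  proof (rule pmf_minimax)
    show "g \<tau> e \<le> 1" for \<tau> e
      by (simp add: g_def Pr_mixed_le_1)
    show "\<exists>\<tau>. \<forall>e. g \<tau> e = p * g \<tau>1 e + (1 - p) * g \<tau>2 e"
      if "0 \<le> p" "p \<le> 1" for \<tau>1 \<tau>2 p
      unfolding g_def using Pr_mixed_bernoulli_mixture[OF that] by (intro exI allI)
  qed
  have uniform: "val_uni_mixed \<Gamma> \<tau> q W = (INF b. val_pr_mixed \<Gamma> b \<tau> q W)" for \<tau>
    unfolding val_uni_mixed_def val_pr_mixed_g INF_pmf_weighted_sum_eq_Min g_def ..
  have "(SUP \<tau>. val_uni_mixed \<Gamma> \<tau> q W) = (INF b. SUP \<tau>. val_pr_mixed \<Gamma> b \<tau> q W)"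
    unfolding uniform by (rule minimax)
  also have "\<dots> = (INF b. val_pr \<Gamma> b q W)"
    by (simp only: val_pr_eq_SUP_val_pr_mixed)
  finally show ?thesis
    using minimax unfolding W_def by (intro conjI)
qed

end
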